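(* For positive integers $r,m$ with $r<m$, \[ \sum_{n=1}^{\infty}\frac{h_n^{(r)}}{n^{m}}=\frac{1}{(r-1)!}\sum_{k=1}^{r}{r\brack k}\left\{\zeta_H(m-k+1)-H_{r-1}\,\zeta(m-k+1)+\sum_{j=1}^{r-1}\mu(m-k+1,j)\right\}, \] where $\mu(s,j)=\sum_{n=1}^{\infty}\frac{1}{n^{s}(n+j)}$.
   Context: Hyperharmonic numbers: $h_n^{(0)}=1/n$ for $n\ge1$, and for $r\ge1$, $h_n^{(r)}=\sum_{j=1}^{n}h_j^{(r-1)}$. $H_n=\sum_{j=1}^n 1/j$ is the $n$-th harmonic number, $H_0=0$. $\zeta$ is the Riemann zeta function and $\zeta_H(s)=\sum_{n=1}^{\infty}H_n/n^{s}$ for integers $s\ge2$. ${r\brack k}$ denotes the unsigned Stirling number of the first kind, defined by $x(x+1)\cdots(x+r-1)=\sum_{k=0}^{r}{r\brack k}x^k$. *)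

theory Defs
  imports "HOL-Analysis.Analysis" "HOL-Combinatorics.Stirling"
begin

text \<open>Hyperharmonic numbers h_n^(r): hyperharm r n. Only n >= 1 is meaningful.\<close>
fun hyperharm :: "nat \<Rightarrow> nat \<Rightarrow> real" where
  "hyperharm 0 n = 1 / real n"
| "hyperharm (Suc r) n = (\<Sum>j=1..n. hyperharm r j)"

definition zeta_nat :: "nat \<Rightarrow> real" where
  "zeta_nat s = (\<Sum>n. 1 / real (Suc n) ^ s)"

definition zeta_H :: "nat \<Rightarrow> real" where
  "zeta_H s = (\<Sum>n. harm (Suc n) / real (Suc n) ^ s)"

definition mu :: "nat \<Rightarrow> nat \<Rightarrow> real" where
  "mu s j = (\<Sum>n. 1 / (real (Suc n) ^ s * real (Suc n + j)))"

end

theory Submission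
  imports Defs
begin

(* Write r = s + 1.  The proof has three ingredients.
   (1) Conway--Guy closed form:  h_n^(s+1) = C(n+s, s) (H_{n+s} - H_s),
       proved from a Pascal-type recurrence for C(N,s)(H_N - H_s).
   (2) Stirling expansion of the binomial coefficient:
       s! C(n+s, s) = n(n+1)...(n+s)/n = sum_k [s+1, k] n^(k-1),
       so that h_n^(s+1)/n^m = (1/s!) sum_k [s+1, k] (H_{n+s} - H_s)/n^(m-k+1).
   (3) Splitting H_{n+s} = H_n + sum_{j=1..s} 1/(n+j), every series
       sum_n (H_{n+s} - H_s)/n^e with e >= 2 equals
       zeta_H(e) - H_s zeta(e) + sum_{j=1..s} mu(e, j);
       convergence rests on the elementary bound H_n <= 2 sqrt n.
   The theorem follows by summing the finite linear combination termwise. *)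

section \<open>Harmonic numbers\<close>

lemma harm_add: "harm (a + b) = (harm a :: real) + (\<Sum>j=1..b. 1 / real (a + j))"
  by (induction b) (simp_all add: harm_Suc field_simps)

lemma inverse_le_sqrt_diff: "1 / real (Suc n) \<le> 2 * (sqrt (real (Suc n)) - sqrt (real n))"
proof -
  define a where "a = sqrt (real n)"
  define b where "b = sqrt (real (Suc n))"
  have a0: "a \<ge> 0" and b1: "b \<ge> 1" and ab: "a \<le> b"
    by (simp_all add: a_def b_def)
  have "(b - a) * (a + b) = 1"
    by (simp add: a_def b_def algebra_simps)
  then have diff: "b - a = 1 / (a + b)"
    using a0 b1 by (simp add: field_simps)
  have "1 / b^2 \<le> 1 / b"
    using b1 by (simp add: field_simps power2_eq_square)
  also have "\<dots> \<le> 2 / (a + b)"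
    using ab a0 b1 by (simp add: field_simps)
  also have "\<dots> = 2 * (b - a)"
    by (simp add: diff)
  finally show ?thesis
    by (simp add: a_def b_def)
qed

text \<open>Harmonic numbers grow no faster than \<open>2\<surd>n\<close>; this is enough for all convergence claims.\<close>
lemma harm_le_sqrt: "harm n \<le> 2 * sqrt (real n)"
proof (induction n)
  case 0
  then show ?case by (simp add: harm_def)
next
  case (Suc n)
  then show ?case
    using inverse_le_sqrt_diff[of n] by (simp add: harm_Suc divide_inverse)
qed

section \<open>The closed form of hyperharmonic numbers\<close>

lemma binomial_harm_pascal:
  "real (Suc N choose Suc s) * (harm (Suc N) - harm (Suc s)) =
   real (N choose Suc s) * (harm N - harm (Suc s)) + real (N choose s) * (harm N - harm s)"
proof -
  define A B where "A = real (N choose Suc s)" and "B = real (N choose s)"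
  have pascal: "real (Suc N choose Suc s) = A + B"
    by (simp add: A_def B_def)
  have absorb: "(A + B) / real (Suc N) = B / real (Suc s)"
  proof -
    have "real (Suc s) * (A + B) = real (Suc N) * B"
      using Suc_times_binomial[of s N] pascal unfolding B_def by (metis of_nat_mult)
    then show ?thesis by (simp add: field_simps)
  qed
  have "real (Suc N choose Suc s) * (harm (Suc N) - harm (Suc s))
      = (A + B) * (harm N - harm (Suc s)) + (A + B) / real (Suc N)"
    unfolding pascal harm_Suc[of N] by (simp add: divide_inverse algebra_simps)
  also have "\<dots> = A * (harm N - harm (Suc s)) + B * (harm N - harm s)"
    unfolding absorb harm_Suc[of s] by (simp add: divide_inverse algebra_simps)
  finally show ?thesis
    by (simp add: A_def B_def)
qed

text \<open>Summing the closed form of order \<open>s+1\<close> gives the closed form of order \<open>s+2\<close>.\<close>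
lemma sum_binomial_harm:
  "(\<Sum>j=1..n. real ((j + s) choose s) * (harm (j + s) - harm s)) =
   real ((n + Suc s) choose Suc s) * (harm (n + Suc s) - harm (Suc s))"
proof (induction n)
  case 0
  then show ?case by simp
next
  case (Suc n)
  then show ?case
    using binomial_harm_pascal[of "n + Suc s" s] by simp
qed

lemma hyperharm_closed:
  "hyperharm (Suc s) n = real ((n + s) choose s) * (harm (n + s) - harm s)"
proof (induction s arbitrary: n)
  case 0
  then show ?case by (simp add: harm_def divide_inverse)
next
  case (Suc s)
  have "hyperharm (Suc (Suc s)) n = (\<Sum>j=1..n. hyperharm (Suc s) j)"
    by simp
  also have "\<dots> = (\<Sum>j=1..n. real ((j + s) choose s) * (harm (j + s) - harm s))"
    by (simp only: Suc.IH)
  also have "\<dots> = real ((n + Suc s) choose Suc s) * (harm (n + Suc s) - harm (Suc s))"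
    by (rule sum_binomial_harm)
  finally show ?case .
qed

section \<open>Stirling expansion\<close>

lemma pochhammer_stirling:
  "pochhammer (x :: real) (Suc s) = x * (\<Sum>k=1..Suc s. real (stirling (Suc s) k) * x ^ (k - 1))"
proof -
  have "pochhammer x (Suc s) = (\<Sum>k\<le>Suc s. real (stirling (Suc s) k) * x ^ k)"
    by (rule stirling_pochhammer[symmetric])
  also have "\<dots> = (\<Sum>k=1..Suc s. real (stirling (Suc s) k) * x ^ k)"
    by (simp add: atMost_atLeast0 sum.atLeast_Suc_atMost)
  also have "\<dots> = x * (\<Sum>k=1..Suc s. real (stirling (Suc s) k) * x ^ (k - 1))"
    unfolding sum_distrib_left
    by (intro sum.cong refl) (auto simp: power_eq_if)
  finally show ?thesis .
qed

lemma fact_binomial_stirling: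
  assumes "n > 0"
  shows "fact s * real ((n + s) choose s) = (\<Sum>k=1..Suc s. real (stirling (Suc s) k) * real n ^ (k - 1))"
proof -
  have "real n * (fact s * real ((n + s) choose s)) = real n * pochhammer (real n + 1) s"
    by (simp add: binomial_gbinomial gbinomial_pochhammer' algebra_simps)
  also have "\<dots> = pochhammer (real n) (Suc s)"
    by (simp add: pochhammer_rec)
  finally show ?thesis
    using assms by (simp add: pochhammer_stirling)
qed

lemma hyperharm_div_power:
  assumes "n > 0" and "Suc s \<le> m"
  shows "hyperharm (Suc s) n / real n ^ m =
    1 / fact s * (\<Sum>k=1..Suc s. real (stirling (Suc s) k) *
                   ((harm (n + s) - harm s) / real n ^ (m - k + 1)))"
proof -
  define D where "D = harm (n + s) - (harm s :: real)"
  define P where "P = (\<Sum>k=1..Suc s. real (stirling (Suc s) k) * real n ^ (k - 1))"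
  have binomial: "real ((n + s) choose s) = P / fact s"
    using fact_binomial_stirling[OF assms(1), of s] by (simp add: P_def field_simps)
  have "hyperharm (Suc s) n / real n ^ m = 1 / fact s * P * (D / real n ^ m)"
    by (simp only: hyperharm_closed binomial D_def) simp
  also have "\<dots> = 1 / fact s * (\<Sum>k=1..Suc s. real (stirling (Suc s) k) * (D / real n ^ (m - k + 1)))"
  proof -
    have shift: "real n ^ (k - 1) * (D / real n ^ m) = D / real n ^ (m - k + 1)"
      if "k \<in> {1..Suc s}" for k
    proof -
      have "k - 1 + (m - k + 1) = m"
        using that assms(2) by auto
      then have "real n ^ (k - 1) * real n ^ (m - k + 1) = real n ^ m"
        by (metis power_add)
      then show ?thesis
        using assms(1) by (simp add: field_simps)
    qed
    have "P * (D / real n ^ m) =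
        (\<Sum>k=1..Suc s. real (stirling (Suc s) k) * (D / real n ^ (m - k + 1)))"
      unfolding P_def sum_distrib_right
      by (intro sum.cong refl) (simp only: mult.assoc shift)
    then show ?thesis
      by (simp only: mult.assoc)
  qed
  finally show ?thesis
    by (simp add: D_def)
qed

section \<open>The zeta-type series\<close>

lemma zeta_nat_sums:
  assumes "e \<ge> 2"
  shows "(\<lambda>n. 1 / real (Suc n) ^ e) sums zeta_nat e"
proof -
  have "summable (\<lambda>n. inverse (real n ^ e))"
    using assms by (rule inverse_power_summable)
  then have "summable (\<lambda>n. 1 / real (Suc n) ^ e)"
    using summable_Suc_iff[of "\<lambda>n. inverse (real n ^ e)"] by (simp add: divide_inverse)
  then show ?thesis
    unfolding zeta_nat_def by (rule summable_sums)
qed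

text \<open>The defining series of \<open>\<zeta>\<^sub>H(e)\<close> converges for \<open>e \<ge> 2\<close>: by \<open>H(n) \<le> 2\<surd>n\<close>
  its terms are dominated by \<open>2 n powr (-3/2)\<close>.\<close>
lemma zeta_H_sums:
  assumes "e \<ge> 2"
  shows "(\<lambda>n. harm (Suc n) / real (Suc n) ^ e) sums zeta_H e"
  unfolding zeta_H_def
proof (rule summable_sums, rule summable_comparison_test')
  have "summable (\<lambda>n. real n powr (-3/2))"
    by (simp add: summable_real_powr_iff)
  then have "summable (\<lambda>n. real (Suc n) powr (-3/2))"
    by (rule summable_Suc_iff[THEN iffD2])
  then show "summable (\<lambda>n. 2 * real (Suc n) powr (-3/2))"
    by (rule summable_mult)
  show "norm (harm (Suc n) / real (Suc n) ^ e) \<le> 2 * real (Suc n) powr (-3/2)" for n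
  proof -
    define x where "x = real (Suc n)"
    have x1: "x \<ge> 1" by (simp add: x_def)
    have "norm (harm (Suc n) / real (Suc n) ^ e) \<le> 2 * sqrt x / x ^ e"
      using harm_le_sqrt[of "Suc n"] x1 unfolding x_def[symmetric]
      by (simp add: norm_harm divide_right_mono)
    also have "\<dots> \<le> 2 * sqrt x / x ^ 2"
      using x1 assms by (intro divide_left_mono power_increasing) auto
    also have "\<dots> = 2 * (x powr (1/2) / x powr 2)"
      using x1 by (simp add: powr_half_sqrt powr_numeral)
    also have "\<dots> = 2 * x powr (-3/2)"
      by (simp flip: powr_diff)
    finally show ?thesis by (simp add: x_def)
  qed
qed

lemma mu_sums:
  assumes "e \<ge> 2"
  shows "(\<lambda>n. 1 / (real (Suc n) ^ e * real (Suc n + j))) sums mu e j"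
  unfolding mu_def
proof (rule summable_sums, rule summable_comparison_test')
  show "summable (\<lambda>n. 1 / real (Suc n) ^ e)"
    using zeta_nat_sums[OF assms] by (rule sums_summable)
  show "norm (1 / (real (Suc n) ^ e * real (Suc n + j))) \<le> 1 / real (Suc n) ^ e" for n
  proof -
    have "real (Suc n) ^ e \<le> real (Suc n) ^ e * real (Suc n + j)"
      by simp
    then show ?thesis
      by (simp add: frac_le)
  qed
qed

text \<open>The series of \<open>(H(n+s) - H(s)) / n\<^sup>e\<close> in terms of \<open>\<zeta>\<^sub>H\<close>, \<open>\<zeta>\<close> and \<open>\<mu>\<close>, obtained by
  splitting \<open>H(n+s)\<close> as \<open>H(n)\<close> plus the sum of \<open>1/(n+j)\<close> over \<open>1 \<le> j \<le> s\<close>.\<close>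
lemma shifted_harm_sums:
  assumes "e \<ge> 2"
  shows "(\<lambda>n. (harm (Suc n + s) - harm s) / real (Suc n) ^ e) sums
           (zeta_H e - harm s * zeta_nat e + (\<Sum>j=1..s. mu e j))"
proof -
  have split: "(harm (Suc n + s) - harm s) / real (Suc n) ^ e =
      harm (Suc n) / real (Suc n) ^ e - harm s * (1 / real (Suc n) ^ e)
      + (\<Sum>j=1..s. 1 / (real (Suc n) ^ e * real (Suc n + j)))" for n
    unfolding harm_add[of "Suc n" s]
    by (simp add: sum_divide_distrib diff_divide_distrib add_divide_distrib mult.commute del: of_nat_Suc)
  have "(\<lambda>n. harm s * (1 / real (Suc n) ^ e)) sums (harm s * zeta_nat e)"
    using zeta_nat_sums[OF assms] by (rule sums_mult)
  moreover have "(\<lambda>n. \<Sum>j=1..s. 1 / (real (Suc n) ^ e * real (Suc n + j))) sums (\<Sum>j=1..s. mu e j)"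
    using mu_sums[OF assms] by (rule sums_sum)
  ultimately show ?thesis
    unfolding split using zeta_H_sums[OF assms] by (intro sums_add sums_diff)
qed

theorem theorem2:
  fixes r m :: nat
  assumes "1 \<le> r" and "r < m"
  shows "(\<Sum>n. hyperharm r (Suc n) / real (Suc n) ^ m) =
    1 / fact (r - 1) *
    (\<Sum>k=1..r. real (stirling r k) *
       (zeta_H (m - k + 1) - harm (r - 1) * zeta_nat (m - k + 1)
        + (\<Sum>j=1..r-1. mu (m - k + 1) j)))"
proof -
  obtain s where r: "r = Suc s"
    using assms(1) by (cases r) auto
  define Z where "Z k = zeta_H (m - k + 1) - harm s * zeta_nat (m - k + 1)
                         + (\<Sum>j=1..s. mu (m - k + 1) j)" for k
  have "(\<lambda>n. real (stirling (Suc s) k) * ((harm (Suc n + s) - harm s) / real (Suc n) ^ (m - k + 1)))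
          sums (real (stirling (Suc s) k) * Z k)" if "k \<in> {1..Suc s}" for k
  proof -
    have "m - k + 1 \<ge> 2"
      using that assms(2) unfolding r by auto
    then show ?thesis
      unfolding Z_def by (rule shifted_harm_sums[THEN sums_mult])
  qed
  then have "(\<lambda>n. 1 / fact s * (\<Sum>k=1..Suc s. real (stirling (Suc s) k) *
                 ((harm (Suc n + s) - harm s) / real (Suc n) ^ (m - k + 1))))
          sums (1 / fact s * (\<Sum>k=1..Suc s. real (stirling (Suc s) k) * Z k))"
    by (rule sums_sum[THEN sums_mult])
  moreover have "hyperharm r (Suc n) / real (Suc n) ^ m =
      1 / fact s * (\<Sum>k=1..Suc s. real (stirling (Suc s) k) *
                 ((harm (Suc n + s) - harm s) / real (Suc n) ^ (m - k + 1)))" for n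
    using assms(2) unfolding r by (intro hyperharm_div_power) auto
  ultimately show ?thesis
    unfolding r Z_def by (simp add: sums_iff)
qed

end
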